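(* Let $\mathbf{N}$ be the operator on $L^2_2(\R,dx)_{\C}$ defined in the context below. Then (i) $\mathbf{N}^{-1}\begin{pmatrix}\mathbb{1}_{[0,t)}\\ 0\end{pmatrix}=\begin{pmatrix} f_1\\ f_2\end{pmatrix}=\mathbf{f}\in L^2_{2}([0,t),dx)_{\C}$, (ii) $\mathbf{N}^{-1}\begin{pmatrix}0\\ \mathbb{1}_{[0,t)}\end{pmatrix}=\begin{pmatrix} g_1\\ g_2\end{pmatrix}=\mathbf{g}\in L^2_{2}([0,t),dx)_{\C}$, where for $s\in[0,t)$ $$f_1(s):=i\cos(2ks)+i\frac{\sin(2kt)}{\cos(2kt)+1}\sin(2ks)=:g_2(s),$$ $$f_2(s):=i\frac{\sin(2kt)}{\cos(2kt)+1}\cos(2ks)-i\sin(2ks)=:-g_1(s)$$ (the functions being extended by $0$ outside $[0,t)$).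
   Context: Fix $0<t<\infty$ and a real constant $k$ (with $\cos(2kt)\neq -1$ so that the formulas make sense). On $L^2(\R)_{\C}$ let $P_{[0,t)}$ be multiplication by $\mathbb{1}_{[0,t)}$, $P_{[0,t)^c}=Id-P_{[0,t)}$, and let $A$ be the operator $(Af)(\tau)=\mathbb{1}_{[0,t)}(\tau)\int_0^\tau f(s)\,ds$, with adjoint (w.r.t. the bilinear pairing) $(A^*f)(\tau)=\mathbb{1}_{[0,t)}(\tau)\int_\tau^t f(s)\,ds$. Let $\mathbf{P}_{[0,t)}$, $\mathbf{P}_{[0,t)^c}$ denote these projections acting componentwise on $L^2_2(\R,dx)_{\C}=L^2(\R)_{\C}\oplus L^2(\R)_{\C}$. The operator $\mathbf{N}:L^2_{2}(\R,dx)_{\C}\to L^2_{2}(\R,dx)_{\C}$ is $$\mathbf{N}=\mathbf{P}_{[0,t)}\begin{pmatrix}-i\,Id & ik(A-A^* )\\ ik(A^*-A) & -i\,Id\end{pmatrix}\mathbf{P}_{[0,t)}+\mathbf{P}_{[0,t)^c},$$ which is bijective (it equals $\mathbf{Id}+\mathbf{K}+\mathbf{L}$ with $\mathbf{K}=-(i+1)\mathbf{P}_{[0,t)}$ and $\mathbf{L}$ the magnetic-potential operator matrix $\mathbf{P}_{[0,t)}\begin{pmatrix}0&ik(A-A^* )\\ ik(A^*-A)&0\end{pmatrix}\mathbf{P}_{[0,t)}$). *)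

theory Defs
  imports "HOL-Analysis.Analysis"
begin

definition L2 :: "(real \<Rightarrow> complex) set" where
  "L2 = {f. f \<in> borel_measurable lborel \<and> integrable lborel (\<lambda>x. (norm (f x))\<^sup>2)}"

definition L2_2 :: "((real \<Rightarrow> complex) \<times> (real \<Rightarrow> complex)) set" where
  "L2_2 = L2 \<times> L2"

definition L2_2_on :: "real set \<Rightarrow> ((real \<Rightarrow> complex) \<times> (real \<Rightarrow> complex)) set" where
  "L2_2_on S = {p \<in> L2_2. (\<forall>x. x \<notin> S \<longrightarrow> fst p x = 0 \<and> snd p x = 0)}"

definition ind :: "real \<Rightarrow> real \<Rightarrow> complex" where
  "ind t x = indicator {0..<t} x"

definition Aop :: "real \<Rightarrow> (real \<Rightarrow> complex) \<Rightarrow> real \<Rightarrow> complex" where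
  "Aop t f \<tau> = ind t \<tau> * (LINT s:{0..\<tau>}|lborel. f s)"

definition Aadj :: "real \<Rightarrow> (real \<Rightarrow> complex) \<Rightarrow> real \<Rightarrow> complex" where
  "Aadj t f \<tau> = ind t \<tau> * (LINT s:{\<tau>..t}|lborel. f s)"

definition Pin :: "real \<Rightarrow> (real \<Rightarrow> complex) \<Rightarrow> real \<Rightarrow> complex" where
  "Pin t f x = ind t x * f x"

definition Pout :: "real \<Rightarrow> (real \<Rightarrow> complex) \<Rightarrow> real \<Rightarrow> complex" where
  "Pout t f x = (1 - ind t x) * f x"

text \<open>The operator N = P [[-i Id, ik(A-A*)],[ik(A*-A), -i Id]] P + P^c.\<close>
definition Nop :: "real \<Rightarrow> real \<Rightarrow> (real \<Rightarrow> complex) \<times> (real \<Rightarrow> complex)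
                    \<Rightarrow> (real \<Rightarrow> complex) \<times> (real \<Rightarrow> complex)" where
  "Nop t k p = (let u = Pin t (fst p); v = Pin t (snd p) in
     (\<lambda>x. Pin t (\<lambda>y. - \<i> * u y + \<i> * of_real k * (Aop t v y - Aadj t v y)) x + Pout t (fst p) x,
      \<lambda>x. Pin t (\<lambda>y. \<i> * of_real k * (Aadj t u y - Aop t u y) - \<i> * v y) x + Pout t (snd p) x))"

definition Ninv :: "real \<Rightarrow> real \<Rightarrow> (real \<Rightarrow> complex) \<times> (real \<Rightarrow> complex)
                    \<Rightarrow> (real \<Rightarrow> complex) \<times> (real \<Rightarrow> complex)" where
  "Ninv t k = inv_into L2_2 (Nop t k)"

end

theory Submission
  imports Defs
begin

text \<open>
  On \<open>[0,t)\<close> the operator \<open>N\<close> couples the two components through their integrals over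
  \<open>[0,x]\<close> and \<open>[x,t]\<close>; outside it is the identity. If \<open>u' = 2k v\<close> and \<open>v' = -2k u\<close>,
  then \<open>u/2\<close> and \<open>-v/2\<close> are primitives of \<open>k v\<close> and \<open>k u\<close>, so \<open>N\<close> maps the truncated pair
  \<open>(u, v)\<close> to the constant pair \<open>-i/2 (u 0 + u t, v 0 + v t)\<close> on \<open>[0,t)\<close>. The functions of the
  statement are the harmonic solutions of this system whose boundary sums are \<open>(2i, 0)\<close> and
  \<open>(0, 2i)\<close>; this is where \<open>c = tan (k t) = sin (2kt) / (cos (2kt) + 1)\<close> comes from.

  Uniqueness: if \<open>N (d1, d2) = 0\<close>, the primitives of \<open>d1, d2\<close> centred at half their total solve
  the same oscillator system and are antiperiodic, \<open>W t = - W 0\<close>, \<open>Z t = - Z 0\<close>. The solution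
  at time \<open>t\<close> is the initial value rotated by the angle \<open>2kt\<close>, which has no eigenvalue \<open>-1\<close>
  unless \<open>cos (2kt) = -1\<close>. Hence \<open>W = Z = 0\<close>, so \<open>d1 = d2 = 0\<close>, and \<open>N\<close> is injective on
  \<open>L\<^sup>2 \<times> L\<^sup>2\<close>, which identifies \<open>Ninv\<close> on the two right-hand sides.
\<close>

definition locally_integrable :: "(real \<Rightarrow> complex) \<Rightarrow> bool" where
  "locally_integrable f \<longleftrightarrow> (\<forall>a b. set_integrable lborel {a..b} f)"

lemma ind_measurable [measurable]: "ind t \<in> borel_measurable borel"
  unfolding ind_def by measurable

lemma ind_eq: "ind t x = (if 0 \<le> x \<and> x < t then 1 else 0)"
  by (simp add: ind_def indicator_def)

lemma Pin_Pin [simp]: "Pin t (Pin t f) = Pin t f"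
  by (simp add: Pin_def ind_eq fun_eq_iff)

lemma Pout_Pin [simp]: "Pout t (Pin t f) = (\<lambda>_. 0)"
  by (simp add: Pin_def Pout_def ind_eq fun_eq_iff)

lemma Pin_diff: "Pin t (\<lambda>s. f s - g s) = (\<lambda>s. Pin t f s - Pin t g s)"
  by (simp add: Pin_def fun_eq_iff right_diff_distrib)

lemma Pout_diff: "Pout t (\<lambda>s. f s - g s) = (\<lambda>s. Pout t f s - Pout t g s)"
  by (simp add: Pout_def fun_eq_iff right_diff_distrib)

lemma L2_imp_locally_integrable:
  assumes "f \<in> L2"
  shows "locally_integrable f"
  unfolding locally_integrable_def
proof (intro allI)
  fix a b :: real
  have meas: "f \<in> borel_measurable lborel" and sq: "integrable lborel (\<lambda>x. (norm (f x))\<^sup>2)"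
    using assms by (auto simp: L2_def)
  have "integrable lborel (\<lambda>x. indicator {a..b} x *\<^sub>R (1::real) + (norm (f x))\<^sup>2)"
    using borel_integrable_compact[of "{a..b}" "\<lambda>_. 1::real"] sq by simp
  then show "set_integrable lborel {a..b} f"
    unfolding set_integrable_def
  proof (rule Bochner_Integration.integrable_bound)
    show "(\<lambda>x. indicator {a..b} x *\<^sub>R f x) \<in> borel_measurable lborel"
      using meas by measurable
    have "norm (f x) \<le> 1 + (norm (f x))\<^sup>2" for x
    proof -
      have "0 \<le> (norm (f x) - 1 / 2)\<^sup>2"
        by simp
      then show ?thesis
        unfolding power2_eq_square by (simp add: algebra_simps)
    qed
    then show "AE x in lborel. norm (indicator {a..b} x *\<^sub>R f x)
        \<le> norm (indicator {a..b} x *\<^sub>R (1::real) + (norm (f x))\<^sup>2)"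
      by (auto simp: indicator_def)
  qed
qed

lemma continuous_imp_locally_integrable:
  assumes "continuous_on UNIV f"
  shows "locally_integrable f"
  using borel_integrable_compact[OF compact_Icc continuous_on_subset[OF assms subset_UNIV]]
  by (simp add: locally_integrable_def set_integrable_def)

lemma locally_integrable_Pin:
  assumes "locally_integrable f"
  shows "locally_integrable (Pin t f)"
  unfolding locally_integrable_def set_integrable_def
proof (intro allI)
  fix a b :: real
  have int: "integrable lborel (\<lambda>s. indicator {a..b} s *\<^sub>R f s)"
    using assms by (simp add: locally_integrable_def set_integrable_def)
  have "integrable lborel (\<lambda>s. ind t s * (indicator {a..b} s *\<^sub>R f s))"
  proof (rule Bochner_Integration.integrable_bound[OF int])
    show "(\<lambda>s. ind t s * (indicator {a..b} s *\<^sub>R f s)) \<in> borel_measurable lborel"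
      using borel_measurable_integrable[OF int] by measurable
    show "AE s in lborel. norm (ind t s * (indicator {a..b} s *\<^sub>R f s)) \<le> norm (indicator {a..b} s *\<^sub>R f s)"
      by (auto simp: ind_eq norm_mult)
  qed
  then show "integrable lborel (\<lambda>s. indicator {a..b} s *\<^sub>R Pin t f s)"
    by (simp add: Pin_def mult.left_commute)
qed

lemma locally_integrable_diff:
  "locally_integrable f \<Longrightarrow> locally_integrable g \<Longrightarrow> locally_integrable (\<lambda>x. f x - g x)"
  unfolding locally_integrable_def set_integrable_def
  by (simp add: scaleR_diff_right)

lemma locally_integrable_integrable_on:
  assumes "locally_integrable f"
  shows "f integrable_on {a..b}"
  using assms set_borel_integral_eq_integral(1) unfolding locally_integrable_def by blast

lemma Pin_continuous_in_L2:
  assumes g: "continuous_on UNIV g"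
  shows "Pin t g \<in> L2"
proof -
  have [measurable]: "g \<in> borel_measurable borel"
    using borel_measurable_continuous_onI[OF g] .
  have int: "integrable lborel (\<lambda>x. indicator {0..t} x *\<^sub>R (norm (g x))\<^sup>2)"
    by (rule borel_integrable_compact) (auto intro!: continuous_intros continuous_on_subset[OF g])
  have "integrable lborel (\<lambda>x. (norm (Pin t g x))\<^sup>2)"
  proof (rule Bochner_Integration.integrable_bound[OF int])
    show "(\<lambda>x. (norm (Pin t g x))\<^sup>2) \<in> borel_measurable lborel"
      unfolding Pin_def by measurable
    show "AE x in lborel. norm ((norm (Pin t g x))\<^sup>2) \<le> norm (indicator {0..t} x *\<^sub>R (norm (g x))\<^sup>2)"
      by (auto simp: Pin_def ind_eq indicator_def norm_mult)
  qed
  moreover have "Pin t g \<in> borel_measurable lborel"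
    unfolding Pin_def by measurable
  ultimately show ?thesis
    by (simp add: L2_def)
qed

lemma Pin_continuous_in_L2_2_on:
  assumes "continuous_on UNIV g" "continuous_on UNIV h"
  shows "(Pin t g, Pin t h) \<in> L2_2_on {0..<t}"
  using assms Pin_continuous_in_L2 by (simp add: L2_2_on_def L2_2_def Pin_def ind_eq)

lemma Aop_eq_integral:
  assumes "locally_integrable f" "0 \<le> x" "x < t"
  shows "Aop t f x = integral {0..x} f"
  using assms set_borel_integral_eq_integral(2)[of "{0..x}" f]
  by (simp add: Aop_def ind_eq locally_integrable_def)

lemma Aadj_eq_integral:
  assumes "locally_integrable f" "0 \<le> x" "x < t"
  shows "Aadj t f x = integral {x..t} f"
  using assms set_borel_integral_eq_integral(2)[of "{x..t}" f]
  by (simp add: Aadj_def ind_eq locally_integrable_def)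

lemma Aop_diff:
  assumes "locally_integrable f" "locally_integrable g"
  shows "Aop t (\<lambda>s. f s - g s) = (\<lambda>\<tau>. Aop t f \<tau> - Aop t g \<tau>)"
  using assms by (simp add: Aop_def locally_integrable_def set_integral_diff(2) right_diff_distrib fun_eq_iff)

lemma Aadj_diff:
  assumes "locally_integrable f" "locally_integrable g"
  shows "Aadj t (\<lambda>s. f s - g s) = (\<lambda>\<tau>. Aadj t f \<tau> - Aadj t g \<tau>)"
  using assms by (simp add: Aadj_def locally_integrable_def set_integral_diff(2) right_diff_distrib fun_eq_iff)

lemma integral_Pin:
  assumes "0 \<le> a" "b \<le> t"
  shows "integral {a..b} (Pin t f) = integral {a..b} f"
  using assms by (intro integral_spike[of "{t}"]) (auto simp: Pin_def ind_eq)

lemma integral_antiderivative_scaled: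
  fixes V v :: "real \<Rightarrow> complex"
  assumes "continuous_on UNIV v" "\<And>s. (V has_vector_derivative of_real k * v s) (at s)" "a \<le> b"
  shows "of_real k * integral {a..b} v = V b - V a"
proof (rule has_integral_unique)
  show "((\<lambda>s. of_real k * v s) has_integral (V b - V a)) {a..b}"
    using fundamental_theorem_of_calculus[OF assms(3), of V "\<lambda>s. of_real k * v s"]
      has_vector_derivative_at_within assms(2) by blast
  show "((\<lambda>s. of_real k * v s) has_integral of_real k * integral {a..b} v) {a..b}"
    using assms(1) by (intro has_integral_mult_right integrable_integral integrable_continuous_interval)
      (auto intro: continuous_on_subset)
qed

lemma Aop_Pin_antiderivative:
  assumes v: "continuous_on UNIV v" and V: "\<And>s. (V has_vector_derivative of_real k * v s) (at s)"
    and x: "0 \<le> x" "x < t"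
  shows "of_real k * Aop t (Pin t v) x = V x - V 0"
proof -
  have "Aop t (Pin t v) x = integral {0..x} v"
    using Aop_eq_integral[OF locally_integrable_Pin[OF continuous_imp_locally_integrable[OF v]] x]
      integral_Pin[of 0 x t v] x by simp
  then show ?thesis
    using integral_antiderivative_scaled[OF v V x(1)] by simp
qed

lemma Aadj_Pin_antiderivative:
  assumes v: "continuous_on UNIV v" and V: "\<And>s. (V has_vector_derivative of_real k * v s) (at s)"
    and x: "0 \<le> x" "x < t"
  shows "of_real k * Aadj t (Pin t v) x = V t - V x"
proof -
  have "Aadj t (Pin t v) x = integral {x..t} v"
    using Aadj_eq_integral[OF locally_integrable_Pin[OF continuous_imp_locally_integrable[OF v]] x]
      integral_Pin[of x t t v] x by simp
  then show ?thesis
    using integral_antiderivative_scaled[OF v V, of x t] x by simp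
qed

lemma Nop_outside:
  assumes "x \<notin> {0..<t}"
  shows "fst (Nop t k p) x = fst p x" "snd (Nop t k p) x = snd p x"
  using assms by (auto simp: Nop_def Let_def Pin_def Pout_def ind_eq)

lemma Nop_inside:
  assumes "locally_integrable p1" "locally_integrable p2" "x \<in> {0..<t}"
  shows "fst (Nop t k (p1, p2)) x =
      - \<i> * p1 x + \<i> * of_real k * (integral {0..x} (Pin t p2) - integral {x..t} (Pin t p2))"
    and "snd (Nop t k (p1, p2)) x =
      \<i> * of_real k * (integral {x..t} (Pin t p1) - integral {0..x} (Pin t p1)) - \<i> * p2 x"
  using assms Aop_eq_integral[OF locally_integrable_Pin] Aadj_eq_integral[OF locally_integrable_Pin]
  by (simp_all add: Nop_def Let_def Pin_def Pout_def ind_eq)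

lemma Nop_diff:
  assumes "locally_integrable p1" "locally_integrable p2" "locally_integrable q1" "locally_integrable q2"
  shows "Nop t k (\<lambda>x. p1 x - q1 x, \<lambda>x. p2 x - q2 x) =
    (\<lambda>x. fst (Nop t k (p1, p2)) x - fst (Nop t k (q1, q2)) x,
     \<lambda>x. snd (Nop t k (p1, p2)) x - snd (Nop t k (q1, q2)) x)"
  unfolding Nop_def Let_def prod.sel Pin_diff Pout_diff
    Aop_diff[OF assms(2,4)[THEN locally_integrable_Pin]] Aadj_diff[OF assms(2,4)[THEN locally_integrable_Pin]]
    Aop_diff[OF assms(1,3)[THEN locally_integrable_Pin]] Aadj_diff[OF assms(1,3)[THEN locally_integrable_Pin]]
  by (simp add: Pin_def Pout_def fun_eq_iff algebra_simps)

lemma Nop_Pin_oscillator: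
  assumes u: "\<And>s. (u has_vector_derivative of_real (2 * k) * v s) (at s)"
    and v: "\<And>s. (v has_vector_derivative - of_real (2 * k) * u s) (at s)"
  shows "Nop t k (Pin t u, Pin t v) =
    (Pin t (\<lambda>_. - \<i> * (u 0 + u t) / 2), Pin t (\<lambda>_. - \<i> * (v 0 + v t) / 2))"
proof -
  have cont: "continuous_on UNIV u" "continuous_on UNIV v"
    using u v by (auto intro!: continuous_at_imp_continuous_on has_vector_derivative_continuous)
  have U: "((\<lambda>s. - v s / 2) has_vector_derivative of_real k * u s) (at s)" for s
    using has_vector_derivative_divide[OF has_vector_derivative_minus[OF v], of 2] by simp
  have V: "((\<lambda>s. u s / 2) has_vector_derivative of_real k * v s) (at s)" for s
    using has_vector_derivative_divide[OF u, of 2] by simp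
  note A = Aop_Pin_antiderivative[OF cont(1) U] Aadj_Pin_antiderivative[OF cont(1) U]
    Aop_Pin_antiderivative[OF cont(2) V] Aadj_Pin_antiderivative[OF cont(2) V]
  have "- \<i> * u x + \<i> * of_real k * (Aop t (Pin t v) x - Aadj t (Pin t v) x) = - \<i> * (u 0 + u t) / 2"
    and "\<i> * of_real k * (Aadj t (Pin t u) x - Aop t (Pin t u) x) - \<i> * v x = - \<i> * (v 0 + v t) / 2"
    if "0 \<le> x" "x < t" for x
    unfolding mult.assoc[of \<i>] right_diff_distrib[of "of_real k"] A[OF that]
    by (simp_all add: field_simps)
  then show ?thesis
    unfolding Nop_def Let_def Pin_Pin Pout_Pin
    by (auto simp: Pin_def ind_eq fun_eq_iff)
qed

definition harmonic :: "real \<Rightarrow> complex \<Rightarrow> complex \<Rightarrow> real \<Rightarrow> complex" where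
  "harmonic \<omega> P Q s = P * of_real (cos (\<omega> * s)) + Q * of_real (sin (\<omega> * s))"

lemma harmonic_0 [simp]: "harmonic \<omega> P Q 0 = P"
  by (simp add: harmonic_def)

lemma continuous_on_harmonic: "continuous_on S (harmonic \<omega> P Q)"
  unfolding harmonic_def[abs_def] by (intro continuous_intros)

lemma has_vector_derivative_cos_sin:
  fixes \<omega> :: real
  shows "((\<lambda>s. of_real (cos (\<omega> * s)) :: complex) has_vector_derivative
      - of_real \<omega> * of_real (sin (\<omega> * x))) (at x within X)"
    and "((\<lambda>s. of_real (sin (\<omega> * s)) :: complex) has_vector_derivative
      of_real \<omega> * of_real (cos (\<omega> * x))) (at x within X)"
proof -
  have "((\<lambda>s. of_real (cos (\<omega> * s)) :: complex) has_vector_derivative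
      of_real (- sin (\<omega> * x) * \<omega>)) (at x within X)"
    and "((\<lambda>s. of_real (sin (\<omega> * s)) :: complex) has_vector_derivative
      of_real (cos (\<omega> * x) * \<omega>)) (at x within X)"
    by (rule has_vector_derivative_of_real; auto intro!: derivative_eq_intros)+
  then show "((\<lambda>s. of_real (cos (\<omega> * s)) :: complex) has_vector_derivative
      - of_real \<omega> * of_real (sin (\<omega> * x))) (at x within X)"
    and "((\<lambda>s. of_real (sin (\<omega> * s)) :: complex) has_vector_derivative
      of_real \<omega> * of_real (cos (\<omega> * x))) (at x within X)"
    by (simp_all add: mult.commute)
qed

lemma harmonic_has_vector_derivative:
  "(harmonic \<omega> P Q has_vector_derivative of_real \<omega> * harmonic \<omega> Q (- P) x) (at x)"
proof -
  note cos = has_vector_derivative_mult_right[OF has_vector_derivative_cos_sin(1)[of \<omega> x UNIV]]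
   and sin = has_vector_derivative_mult_right[OF has_vector_derivative_cos_sin(2)[of \<omega> x UNIV]]
  show ?thesis
    unfolding harmonic_def[abs_def]
    by (rule has_vector_derivative_eq_rhs[OF has_vector_derivative_add[OF cos sin]]) algebra
qed

lemma harmonic_partner_has_vector_derivative:
  "(harmonic \<omega> Q (- P) has_vector_derivative - of_real \<omega> * harmonic \<omega> P Q x) (at x)"
  using harmonic_has_vector_derivative[of \<omega> Q "- P" x] by (simp add: harmonic_def algebra_simps)

lemma Nop_Pin_harmonic:
  "Nop t k (Pin t (harmonic (2 * k) P Q), Pin t (harmonic (2 * k) Q (- P))) =
    (Pin t (\<lambda>_. - \<i> * (P + harmonic (2 * k) P Q t) / 2),
     Pin t (\<lambda>_. - \<i> * (Q + harmonic (2 * k) Q (- P) t) / 2))"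
  using Nop_Pin_oscillator[OF harmonic_has_vector_derivative harmonic_partner_has_vector_derivative]
  by simp

lemma oscillator_solution_eq_harmonic:
  fixes W Z :: "real \<Rightarrow> complex" and \<omega> T :: real
  assumes W: "\<And>x. x \<in> {0..T} \<Longrightarrow> (W has_vector_derivative of_real \<omega> * Z x) (at x within {0..T})"
    and Z: "\<And>x. x \<in> {0..T} \<Longrightarrow> (Z has_vector_derivative - of_real \<omega> * W x) (at x within {0..T})"
    and x: "x \<in> {0..T}"
  shows "W x = harmonic \<omega> (W 0) (Z 0) x" and "Z x = harmonic \<omega> (Z 0) (- W 0) x"
proof -
  define C where "C s = (of_real (cos (\<omega> * s)) :: complex)" for s
  define S where "S s = (of_real (sin (\<omega> * s)) :: complex)" for s
  note C' = has_vector_derivative_cos_sin(1)[of \<omega>, folded C_def S_def]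
   and S' = has_vector_derivative_cos_sin(2)[of \<omega>, folded C_def S_def]
  have pyth: "C s * C s + S s * S s = 1" for s
    unfolding C_def S_def of_real_mult[symmetric] of_real_add[symmetric] by simp
  \<comment> \<open>Rotating (W, Z) back by the angle \<open>\<omega> s\<close> gives a pair with zero derivative.\<close>
  define E where "E s = W s * C s - Z s * S s" for s
  define F where "F s = W s * S s + Z s * C s" for s
  have E': "(E has_vector_derivative 0) (at y within {0..T})"
    and F': "(F has_vector_derivative 0) (at y within {0..T})" if "y \<in> {0..T}" for y
  proof -
    have "(E has_vector_derivative (W y * (- of_real \<omega> * S y) + of_real \<omega> * Z y * C y)
        - (Z y * (of_real \<omega> * C y) + - of_real \<omega> * W y * S y)) (at y within {0..T})"
      unfolding E_def by (intro has_vector_derivative_diff has_vector_derivative_mult W Z C' S' that)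
    moreover have "(F has_vector_derivative (W y * (of_real \<omega> * C y) + of_real \<omega> * Z y * S y)
        + (Z y * (- of_real \<omega> * S y) + - of_real \<omega> * W y * C y)) (at y within {0..T})"
      unfolding F_def by (intro has_vector_derivative_add has_vector_derivative_mult W Z C' S' that)
    ultimately show "(E has_vector_derivative 0) (at y within {0..T})"
      and "(F has_vector_derivative 0) (at y within {0..T})"
      by (simp_all add: algebra_simps)
  qed
  obtain e where e: "\<And>y. y \<in> {0..T} \<Longrightarrow> E y = e"
    using has_vector_derivative_zero_constant[of "{0..T}" E] E' by blast
  obtain f where f: "\<And>y. y \<in> {0..T} \<Longrightarrow> F y = f"
    using has_vector_derivative_zero_constant[of "{0..T}" F] F' by blast
  have "0 \<in> {0..T}"
    using x by simp
  then have "E x = E 0" "F x = F 0"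
    using e f x by simp_all
  moreover have "E 0 = W 0" "F 0 = Z 0"
    by (simp_all add: E_def F_def C_def S_def)
  moreover have "W x = E x * C x + F x * S x" "Z x = F x * C x - E x * S x"
  proof -
    have "W x = W x * (C x * C x + S x * S x)" "Z x = Z x * (C x * C x + S x * S x)"
      by (simp_all add: pyth)
    then show "W x = E x * C x + F x * S x" "Z x = F x * C x - E x * S x"
      by (simp_all add: E_def F_def algebra_simps)
  qed
  ultimately show "W x = harmonic \<omega> (W 0) (Z 0) x" and "Z x = harmonic \<omega> (Z 0) (- W 0) x"
    by (simp_all add: harmonic_def C_def S_def)
qed

lemma harmonic_antiperiodic_eq_zero:
  fixes a b :: complex
  assumes "cos (\<omega> * T) \<noteq> -1"
    and "harmonic \<omega> a b T = - a" and "harmonic \<omega> b (- a) T = - b"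
  shows "a = 0 \<and> b = 0"
proof -
  define C S where "C = (of_real (cos (\<omega> * T)) :: complex)" and "S = (of_real (sin (\<omega> * T)) :: complex)"
  have ha: "a * (1 + C) + b * S = 0" and hb: "b * (1 + C) - a * S = 0"
    using assms(2,3) by (simp_all add: harmonic_def C_def S_def eq_neg_iff_add_eq_0 algebra_simps)
  have "C * C + S * S = 1"
    unfolding C_def S_def of_real_mult[symmetric] of_real_add[symmetric] by simp
  then have N: "(1 + C) * (1 + C) + S * S = 2 * (1 + C)"
    by (simp add: algebra_simps)
  have "1 + C = of_real (1 + cos (\<omega> * T))" "1 + cos (\<omega> * T) \<noteq> 0"
    using assms(1) by (simp_all add: C_def)
  then have nz: "2 * (1 + C) \<noteq> 0"
    by (metis mult_eq_0_iff of_real_eq_0_iff zero_neq_numeral)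
  have "a * (2 * (1 + C)) = (1 + C) * (a * (1 + C) + b * S) - S * (b * (1 + C) - a * S)"
    and "b * (2 * (1 + C)) = S * (a * (1 + C) + b * S) + (1 + C) * (b * (1 + C) - a * S)"
    unfolding N[symmetric] by (simp_all add: algebra_simps)
  then show ?thesis
    using ha hb nz by simp
qed

lemma indefinite_integral_has_vector_derivative_spike:
  fixes f g :: "real \<Rightarrow> 'a::banach"
  assumes g: "continuous_on {a..b} g" and fg: "\<And>y. y \<in> {a..<b} \<Longrightarrow> f y = g y"
    and x: "x \<in> {a..b}"
  shows "((\<lambda>y. integral {a..y} f) has_vector_derivative g x) (at x within {a..b})"
proof (rule has_vector_derivative_transform[OF x _ integral_has_vector_derivative[OF g x]])
  fix y assume "y \<in> {a..b}"
  then show "integral {a..y} f = integral {a..y} g"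
    using fg by (intro integral_spike[of "{b}"]) auto
qed

lemma coupled_integral_equations_zero:
  fixes u1 u2 :: "real \<Rightarrow> complex" and k t :: real
  assumes t: "0 \<le> t" and cos: "cos (2 * k * t) \<noteq> -1"
    and int: "u1 integrable_on {0..t}" "u2 integrable_on {0..t}"
    and eq1: "\<And>x. x \<in> {0..<t} \<Longrightarrow> u1 x = of_real k * (integral {0..x} u2 - integral {x..t} u2)"
    and eq2: "\<And>x. x \<in> {0..<t} \<Longrightarrow> u2 x = of_real k * (integral {x..t} u1 - integral {0..x} u1)"
    and x: "x \<in> {0..<t}"
  shows "u1 x = 0 \<and> u2 x = 0"
proof -
  \<comment> \<open>Centring the primitives at half their total turns the boundary condition into \<open>W t = - W 0\<close>.\<close>
  define W where "W y = integral {0..y} u1 - integral {0..t} u1 / 2" for y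
  define Z where "Z y = integral {0..y} u2 - integral {0..t} u2 / 2" for y
  have u1: "u1 y = of_real (2 * k) * Z y" and u2: "u2 y = - of_real (2 * k) * W y"
    if "y \<in> {0..<t}" for y
  proof -
    have i1: "integral {y..t} u1 = integral {0..t} u1 - integral {0..y} u1"
      and i2: "integral {y..t} u2 = integral {0..t} u2 - integral {0..y} u2"
      using that Henstock_Kurzweil_Integration.integral_combine[OF _ _ int(1), of y]
        Henstock_Kurzweil_Integration.integral_combine[OF _ _ int(2), of y]
      by (auto simp: eq_diff_eq add.commute)
    show "u1 y = of_real (2 * k) * Z y" "u2 y = - of_real (2 * k) * W y"
      unfolding eq1[OF that] eq2[OF that] i1 i2 W_def Z_def by (simp_all add: algebra_simps)
  qed
  have cW: "continuous_on {0..t} W" and cZ: "continuous_on {0..t} Z"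
    unfolding W_def Z_def by (intro continuous_intros indefinite_integral_continuous_1 int)+
  have W': "(W has_vector_derivative of_real (2 * k) * Z y) (at y within {0..t})"
    if "y \<in> {0..t}" for y
  proof -
    have "((\<lambda>y. integral {0..y} u1) has_vector_derivative of_real (2 * k) * Z y) (at y within {0..t})"
      using u1 that by (intro indefinite_integral_has_vector_derivative_spike continuous_intros cZ)
    from has_vector_derivative_diff[OF this has_vector_derivative_const]
    show ?thesis
      unfolding W_def[abs_def] by simp
  qed
  have Z': "(Z has_vector_derivative - of_real (2 * k) * W y) (at y within {0..t})"
    if "y \<in> {0..t}" for y
  proof -
    have "((\<lambda>y. integral {0..y} u2) has_vector_derivative - of_real (2 * k) * W y) (at y within {0..t})"
      using u2 that by (intro indefinite_integral_has_vector_derivative_spike continuous_intros cW)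
    from has_vector_derivative_diff[OF this has_vector_derivative_const]
    show ?thesis
      unfolding Z_def[abs_def] by simp
  qed
  have ends: "t \<in> {0..t}" "x \<in> {0..t}"
    using t x by auto
  have "W t = - W 0" "Z t = - Z 0"
    by (simp_all add: W_def Z_def)
  then have "W 0 = 0 \<and> Z 0 = 0"
    using oscillator_solution_eq_harmonic[OF W' Z' ends(1)]
    by (intro harmonic_antiperiodic_eq_zero[OF cos]) simp_all
  then show ?thesis
    using oscillator_solution_eq_harmonic[OF W' Z' ends(2)] u1[OF x] u2[OF x]
    by (simp add: harmonic_def)
qed

lemma Nop_kernel_trivial:
  assumes t: "0 \<le> t" and cos: "cos (2 * k * t) \<noteq> -1"
    and p: "locally_integrable p1" "locally_integrable p2"
    and ker: "Nop t k (p1, p2) = (\<lambda>_. 0, \<lambda>_. 0)"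
  shows "p1 = (\<lambda>_. 0) \<and> p2 = (\<lambda>_. 0)"
proof -
  have "p1 x = 0 \<and> p2 x = 0" for x
  proof (cases "x \<in> {0..<t}")
    case True
    have "Pin t p1 y = of_real k * (integral {0..y} (Pin t p2) - integral {y..t} (Pin t p2))"
      and "Pin t p2 y = of_real k * (integral {y..t} (Pin t p1) - integral {0..y} (Pin t p1))"
      if "y \<in> {0..<t}" for y
    proof -
      have "\<i> * (of_real k * (integral {0..y} (Pin t p2) - integral {y..t} (Pin t p2)) - p1 y) = 0"
        "\<i> * (of_real k * (integral {y..t} (Pin t p1) - integral {0..y} (Pin t p1)) - p2 y) = 0"
        using Nop_inside[OF p that, of k] ker by (simp_all add: algebra_simps)
      with that show "Pin t p1 y = of_real k * (integral {0..y} (Pin t p2) - integral {y..t} (Pin t p2))"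
        and "Pin t p2 y = of_real k * (integral {y..t} (Pin t p1) - integral {0..y} (Pin t p1))"
        by (simp_all add: Pin_def ind_eq)
    qed
    moreover have "Pin t p1 integrable_on {0..t}" "Pin t p2 integrable_on {0..t}"
      using p[THEN locally_integrable_Pin] by (simp_all add: locally_integrable_integrable_on)
    ultimately have "Pin t p1 x = 0 \<and> Pin t p2 x = 0"
      using coupled_integral_equations_zero[OF t cos _ _ _ _ True] by blast
    with True show ?thesis
      by (simp add: Pin_def ind_eq)
  next
    case False
    then show ?thesis
      using Nop_outside[OF False, of k "(p1, p2)"] ker by simp
  qed
  then show ?thesis
    by auto
qed

lemma inj_on_Nop:
  assumes "0 \<le> t" "cos (2 * k * t) \<noteq> -1"
  shows "inj_on (Nop t k) L2_2"
proof (rule inj_onI)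
  fix p q assume "p \<in> L2_2" "q \<in> L2_2" and eq: "Nop t k p = Nop t k q"
  then have li: "locally_integrable (fst p)" "locally_integrable (snd p)"
    "locally_integrable (fst q)" "locally_integrable (snd q)"
    by (auto simp: L2_2_def intro: L2_imp_locally_integrable)
  have "Nop t k (\<lambda>x. fst p x - fst q x, \<lambda>x. snd p x - snd q x) = (\<lambda>_. 0, \<lambda>_. 0)"
    using Nop_diff[OF li] eq by simp
  then show "p = q"
    using Nop_kernel_trivial[OF assms locally_integrable_diff locally_integrable_diff] li
    by (simp add: prod_eq_iff fun_eq_iff)
qed

lemma harmonic_half_angle_endpoint:
  fixes \<omega> T :: real and P :: complex
  assumes "cos (\<omega> * T) \<noteq> -1"
  defines "c \<equiv> sin (\<omega> * T) / (cos (\<omega> * T) + 1)"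
  shows "harmonic \<omega> P (P * c) T = P"
    and "harmonic \<omega> (P * c) (- P) T = - (P * c)"
    and "harmonic \<omega> (- (P * c)) P T = P * c"
proof -
  have nz: "cos (\<omega> * T) + 1 \<noteq> 0"
    using assms(1) by linarith
  have "sin (\<omega> * T) * sin (\<omega> * T) = (1 - cos (\<omega> * T)) * (cos (\<omega> * T) + 1)"
    using sin_squared_eq[of "\<omega> * T"] by (simp add: power2_eq_square algebra_simps)
  with nz have "cos (\<omega> * T) + c * sin (\<omega> * T) = 1" "c * cos (\<omega> * T) - sin (\<omega> * T) = - c"
    by (simp_all add: c_def field_simps)
  moreover have "harmonic \<omega> P (P * c) T = P * of_real (cos (\<omega> * T) + c * sin (\<omega> * T))"
    "harmonic \<omega> (P * c) (- P) T = P * of_real (c * cos (\<omega> * T) - sin (\<omega> * T))"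
    "harmonic \<omega> (- (P * c)) P T = - P * of_real (c * cos (\<omega> * T) - sin (\<omega> * T))"
    by (simp_all add: harmonic_def algebra_simps)
  ultimately show "harmonic \<omega> P (P * c) T = P"
    and "harmonic \<omega> (P * c) (- P) T = - (P * c)"
    and "harmonic \<omega> (- (P * c)) P T = P * c"
    by simp_all
qed

theorem proposition3p5:
  fixes t k :: real
  assumes "0 < t" and "cos (2 * k * t) \<noteq> -1"
  defines "c \<equiv> sin (2 * k * t) / (cos (2 * k * t) + 1)"
  defines "f1 \<equiv> (\<lambda>s. ind t s * (\<i> * cos (2 * k * s) + \<i> * c * sin (2 * k * s)))"
      and "f2 \<equiv> (\<lambda>s. ind t s * (\<i> * c * cos (2 * k * s) - \<i> * sin (2 * k * s)))"
  shows "Ninv t k (ind t, (\<lambda>_. 0)) = (f1, f2) \<and> (f1, f2) \<in> L2_2_on {0..<t}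
       \<and> Ninv t k ((\<lambda>_. 0), ind t) = (\<lambda>s. - f2 s, f1) \<and> (\<lambda>s. - f2 s, f1) \<in> L2_2_on {0..<t}"
proof -
  define h where "h P Q = harmonic (2 * k) P Q" for P Q
  have f: "f1 = Pin t (h \<i> (\<i> * c))" "f2 = Pin t (h (\<i> * c) (- \<i>))"
    and g: "(\<lambda>s. - f2 s) = Pin t (h (- (\<i> * c)) \<i>)"
    by (simp_all add: f1_def f2_def h_def harmonic_def Pin_def fun_eq_iff algebra_simps)
  have "h \<i> (\<i> * c) t = \<i>" "h (\<i> * c) (- \<i>) t = - (\<i> * c)" "h (- (\<i> * c)) \<i> t = \<i> * c"
    using harmonic_half_angle_endpoint[of "2 * k" t \<i>] assms(2) by (simp_all add: h_def c_def)
  then have "Nop t k (Pin t (h \<i> (\<i> * c)), Pin t (h (\<i> * c) (- \<i>))) = (ind t, \<lambda>_. 0)"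
    and "Nop t k (Pin t (h (- (\<i> * c)) \<i>), Pin t (h \<i> (\<i> * c))) = (\<lambda>_. 0, ind t)"
    using Nop_Pin_harmonic[of t k \<i> "\<i> * c"] Nop_Pin_harmonic[of t k "- (\<i> * c)" \<i>]
    by (simp_all add: h_def Pin_def ind_eq fun_eq_iff)
  moreover have "(Pin t (h \<i> (\<i> * c)), Pin t (h (\<i> * c) (- \<i>))) \<in> L2_2_on {0..<t}"
    "(Pin t (h (- (\<i> * c)) \<i>), Pin t (h \<i> (\<i> * c))) \<in> L2_2_on {0..<t}"
    unfolding h_def by (simp_all add: Pin_continuous_in_L2_2_on continuous_on_harmonic)
  moreover have "inj_on (Nop t k) L2_2"
    using assms(1,2) by (simp add: inj_on_Nop)
  ultimately show ?thesis
    unfolding Ninv_def g unfolding f by (simp add: inv_into_f_eq L2_2_on_def)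
qed

end
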